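(* Let $s=s_1\cdots s_n$ be a normalized fully ternary string of length $n$ with $s_n=2$ and $s\neq 0212$. Then $d_{\rm s}(s)\le n-2$. (The string $0212$ satisfies $d_{\rm s}(0212)=3$.)
   Context: Strings are finite words over $\{0,1,2,\dots\}$. A string is \emph{normalized} if no two adjacent symbols are equal; the \emph{normalization} of a string replaces every maximal run of identical symbols by a single copy. A string is \emph{fully $k$-ary} if the set of symbols occurring in it is exactly $\{0,\dots,k-1\}$; fully ternary means fully $3$-ary. For a normalized string $s=s_1\cdots s_n$ and $1\le i\le n$, the flip $f^{(i)}(s)$ is the normalization of $s_i\cdots s_1 s_{i+1}\cdots s_n$. The sorting distance $d_{\rm s}(s)$ of a normalized fully $k$-ary string $s$ is the minimum number of flips needed to transform $s$ into $01\cdots(k-1)$. *)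

theory Defs
  imports Main
begin

text \<open>Strings are lists of natural numbers (symbols). Positions are 1-based in the paper.\<close>

definition normalized :: "nat list \<Rightarrow> bool" where
  "normalized s \<longleftrightarrow> (\<forall>j. Suc j < length s \<longrightarrow> s ! j \<noteq> s ! Suc j)"

definition normalization :: "nat list \<Rightarrow> nat list" where
  "normalization s = remdups_adj s"

definition fully_kary :: "nat \<Rightarrow> nat list \<Rightarrow> bool" where
  "fully_kary k s \<longleftrightarrow> set s = {0..<k}"

definition flip :: "nat \<Rightarrow> nat list \<Rightarrow> nat list" where
  "flip i s = normalization (rev (take i s) @ drop i s)"

definition flip_step :: "nat list \<Rightarrow> nat list \<Rightarrow> bool" where
  "flip_step s t \<longleftrightarrow> (\<exists>i. 1 \<le> i \<and> i \<le> length s \<and> t = flip i s)"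

definition sortable :: "nat \<Rightarrow> nat list \<Rightarrow> bool" where
  "sortable k s \<longleftrightarrow> (\<exists>m. (flip_step ^^ m) s [0..<k])"

definition sorting_distance :: "nat \<Rightarrow> nat list \<Rightarrow> nat" where
  "sorting_distance k s = (LEAST m. (flip_step ^^ m) s [0..<k])"

end

theory Submission
  imports Defs
begin

text \<open>If the first symbol of \<open>s\<close> occurs again, say at
  position \<open>i + 1\<close>, then flipping the first \<open>i\<close> symbols merges the two copies and yields a
  string of length \<open>n - 1\<close> that again satisfies the hypotheses (for \<open>n \<ge> 6\<close> it cannot be
  \<open>0212\<close>). Otherwise the first symbol is unique, the rest alternates between the other two
  symbols and ends in \<open>2\<close>, so \<open>s\<close> is one of \<open>0(12)\<^sup>k\<close>, \<open>02(12)\<^sup>k\<close>, \<open>1(02)\<^sup>k\<close>,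
  \<open>12(02)\<^sup>k\<close>, each sorted by an explicit flip sequence of length at most \<open>n - 2\<close>.
  Strings of length at most 5 are checked by exhaustive search.\<close>

lemma normalized_iff_distinct_adj: "normalized s \<longleftrightarrow> distinct_adj s"
  by (simp add: normalized_def distinct_adj_conv_nth)

lemma distinct_adj_flip: "distinct_adj (flip i s)"
  by (simp add: flip_def normalization_def)

lemma flip_append_no_merge:
  assumes "distinct_adj (xs @ ys)" and "ys = [] \<or> hd ys \<noteq> hd xs" and "length xs = i"
  shows "flip i (xs @ ys) = rev xs @ ys"
proof -
  have "distinct_adj (rev xs @ ys)"
    using assms(1,2) by (auto simp: distinct_adj_append_iff last_rev)
  then show ?thesis
    unfolding assms(3)[symmetric] by (simp add: flip_def normalization_def distinct_adj_altdef)
qed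

lemma flip_append_merge:
  assumes "distinct_adj (x # xs @ x # ys)" and "Suc (length xs) = i"
  shows "flip i (x # xs @ x # ys) = rev xs @ x # ys"
proof -
  have "distinct_adj (rev xs @ x # ys)"
    using assms(1) by (cases xs) (auto simp: distinct_adj_append_iff distinct_adj_Cons last_rev)
  moreover have "remdups_adj (rev xs @ x # x # ys) = remdups_adj (rev xs @ x # ys)"
    by (metis remdups_adj.simps(3) remdups_adj_append)
  ultimately show ?thesis
    unfolding assms(2)[symmetric] by (simp add: flip_def normalization_def distinct_adj_altdef)
qed

definition flips_within :: "nat \<Rightarrow> nat list \<Rightarrow> nat list \<Rightarrow> bool" where
  "flips_within m s t \<longleftrightarrow> (\<exists>k\<le>m. (flip_step ^^ k) s t)"

lemma flips_within_refl [simp]: "flips_within m t t"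
  unfolding flips_within_def by (intro exI[of _ 0]) simp

lemma flips_within_flip:
  assumes "flip i s = s'" and "1 \<le> i" "i \<le> length s" and "flips_within m s' t"
  shows "flips_within (Suc m) s t"
proof -
  obtain k where "k \<le> m" "(flip_step ^^ k) s' t"
    using assms(4) by (auto simp: flips_within_def)
  moreover have "flip_step s s'"
    using assms(1-3) by (auto simp: flip_step_def)
  ultimately show ?thesis
    unfolding flips_within_def by (metis Suc_le_mono relpowp_Suc_I2)
qed

lemma sortable_and_sorting_distance_le:
  assumes "flips_within m s [0..<k]"
  shows "sortable k s \<and> sorting_distance k s \<le> m"
proof -
  obtain j where "j \<le> m" "(flip_step ^^ j) s [0..<k]"
    using assms by (auto simp: flips_within_def)
  then show ?thesis
    unfolding sortable_def sorting_distance_def by (meson Least_le le_trans)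
qed

definition alternating :: "'a \<Rightarrow> 'a \<Rightarrow> nat \<Rightarrow> 'a list" where
  "alternating x y k = concat (replicate k [x, y])"

lemma alternating_0 [simp]: "alternating x y 0 = []"
  by (simp add: alternating_def)

lemma alternating_Suc [simp]: "alternating x y (Suc k) = x # y # alternating x y k"
  by (simp add: alternating_def)

lemma alternating_Suc_snoc: "alternating x y (Suc k) = alternating x y k @ [x, y]"
  by (induction k) auto

lemma alternating_append_Cons_Cons [simp]:
  "alternating x y k @ x # y # zs = x # y # alternating x y k @ zs"
  by (induction k) auto

lemma rev_alternating [simp]: "rev (alternating x y k) = alternating y x k"
  by (induction k) (simp_all add: alternating_Suc_snoc)

lemma length_alternating [simp]: "length (alternating x y k) = 2 * k"
  by (induction k) auto

lemma distinct_adj_alternating_append [simp]: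
  "x \<noteq> y \<Longrightarrow>
    distinct_adj (alternating x y k @ zs) \<longleftrightarrow> distinct_adj zs \<and> (0 < k \<and> zs \<noteq> [] \<longrightarrow> hd zs \<noteq> y)"
proof (induction k)
  case (Suc k)
  then show ?case by (cases k) (auto simp: distinct_adj_Cons)
qed simp

lemma distinct_adj_alternating [simp]: "x \<noteq> y \<Longrightarrow> distinct_adj (alternating x y k)"
  using distinct_adj_alternating_append[of x y k "[]"] by simp

lemma distinct_adj_Cons_alternating_append [simp]:
  "x \<noteq> y \<Longrightarrow> distinct_adj (z # alternating x y k @ zs) \<longleftrightarrow>
    (if k = 0 then distinct_adj (z # zs) else z \<noteq> x \<and> distinct_adj (alternating x y k @ zs))"
  by (cases k) auto

lemma distinct_adj_Cons_alternating [simp]: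
  "x \<noteq> y \<Longrightarrow> distinct_adj (z # alternating x y k) \<longleftrightarrow> k = 0 \<or> z \<noteq> x"
  using distinct_adj_Cons_alternating_append[of x y z k "[]"] by auto

lemma flips_within_012_alternating_02:
  "flips_within (2 * j) ([0,1,2] @ alternating 0 2 j) [0,1,2]"
proof (induction j)
  case (Suc j)
  have "flip 3 ([0,1,2] @ alternating 0 2 (Suc j)) = [2,1,0,2] @ alternating 0 2 j"
    using flip_append_merge[of 0 "[1,2]" "2 # alternating 0 2 j" 3] by simp
  moreover have "flip 3 ([2,1,0,2] @ alternating 0 2 j) = [0,1,2] @ alternating 0 2 j"
    using flip_append_merge[of 2 "[1,0]" "alternating 0 2 j" 3] by simp
  ultimately show ?case
    using flips_within_flip[of 3] Suc by simp
qed simp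

lemma flips_within_alternating_21_02:
  "flips_within (2 * j + 1) (alternating 2 1 (Suc j) @ [0,2]) [0,1,2]"
proof (induction j)
  case 0
  have "flip 3 [2,1,0,2] = [0,1,2]"
    using flip_append_merge[of 2 "[1,0]" "[]" 3] by simp
  then show ?case
    using flips_within_flip[of 3] by simp
next
  case (Suc j)
  have "flip 2 (alternating 2 1 (Suc (Suc j)) @ [0,2]) = 1 # alternating 2 1 (Suc j) @ [0,2]"
    using flip_append_merge[of 2 "[1]" "1 # alternating 2 1 j @ [0,2]" 2] by simp
  moreover have "flip 2 (1 # alternating 2 1 (Suc j) @ [0,2]) = alternating 2 1 (Suc j) @ [0,2]"
    using flip_append_merge[of 1 "[2]" "alternating 2 1 j @ [0,2]" 2] by simp
  ultimately show ?case
    using flips_within_flip[of 2] Suc by simp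
qed

lemma flips_within_1_alternating_21_02:
  "flips_within (2 * j + 2) (1 # alternating 2 1 (Suc j) @ [0,2]) [0,1,2]"
proof -
  have "flip 2 (1 # alternating 2 1 (Suc j) @ [0,2]) = alternating 2 1 (Suc j) @ [0,2]"
    using flip_append_merge[of 1 "[2]" "alternating 2 1 j @ [0,2]" 2] by simp
  then show ?thesis
    using flips_within_flip[of 2] flips_within_alternating_21_02[of j] by simp
qed

lemma flips_within_0_alternating_12:
  "flips_within (2 * j + 3) (0 # alternating 1 2 (Suc (Suc j))) [0,1,2]"
proof -
  have "flip (2 * j + 4) ((0 # alternating 1 2 (Suc j) @ [1]) @ [2]) =
      1 # alternating 2 1 (Suc j) @ [0,2]"
    using flip_append_no_merge[of "0 # alternating 1 2 (Suc j) @ [1]" "[2]" "2 * j + 4"] by simp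
  then have "flips_within (Suc (2 * j + 2)) ((0 # alternating 1 2 (Suc j) @ [1]) @ [2]) [0,1,2]"
    by (rule flips_within_flip) (use flips_within_1_alternating_21_02 in simp_all)
  then show ?thesis
    by (simp add: eval_nat_numeral)
qed

lemma flips_within_02_alternating_12:
  "flips_within (2 * j + 4) ([0,2] @ alternating 1 2 (Suc (Suc j))) [0,1,2]"
proof -
  have "flip (2 * j + 5) (2 # (0 # alternating 1 2 (Suc j) @ [1]) @ [2]) =
      1 # alternating 2 1 (Suc j) @ [0,2]"
    using flip_append_merge[of 2 "0 # alternating 1 2 (Suc j) @ [1]" "[]" "2 * j + 5"] by simp
  then have "flips_within (Suc (2 * j + 2)) (2 # (0 # alternating 1 2 (Suc j) @ [1]) @ [2]) [0,1,2]"
    by (rule flips_within_flip) (use flips_within_1_alternating_21_02 in simp_all)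
  moreover have "flip 2 ([0,2] @ alternating 1 2 (Suc (Suc j))) =
      2 # (0 # alternating 1 2 (Suc j) @ [1]) @ [2]"
    using flip_append_no_merge[of "[0,2]" "alternating 1 2 (Suc (Suc j))" 2]
    by (simp add: alternating_Suc_snoc[of 1 2 "Suc j"])
  ultimately have
    "flips_within (Suc (Suc (2 * j + 2))) ([0,2] @ alternating 1 2 (Suc (Suc j))) [0,1,2]"
    using flips_within_flip by simp
  then show ?thesis
    by (simp add: eval_nat_numeral)
qed

lemma flips_within_1_alternating_02:
  "flips_within (2 * j + 1) (1 # alternating 0 2 (Suc j)) [0,1,2]"
proof -
  have "flip 2 (1 # alternating 0 2 (Suc j)) = [0,1,2] @ alternating 0 2 j"
    using flip_append_no_merge[of "[1,0]" "2 # alternating 0 2 j" 2] by simp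
  then show ?thesis
    using flips_within_flip[of 2] flips_within_012_alternating_02[of j] by simp
qed

lemma flips_within_12_alternating_02:
  "flips_within (2 * j + 4) ([1,2] @ alternating 0 2 (Suc (Suc j))) [0,1,2]"
proof -
  have "flip (2 * j + 5) (2 # (0 # alternating 2 0 j @ [2,1,0]) @ [2]) =
      [0,1,2] @ alternating 0 2 (Suc j)"
    using flip_append_merge[of 2 "0 # alternating 2 0 j @ [2,1,0]" "[]" "2 * j + 5"]
    by (simp add: alternating_Suc_snoc)
  then have "flips_within (Suc (2 * j + 2)) (2 # (0 # alternating 2 0 j @ [2,1,0]) @ [2]) [0,1,2]"
    by (rule flips_within_flip) (use flips_within_012_alternating_02[of "Suc j"] in simp_all)
  moreover have "flip (2 * j + 4) ([1,2] @ alternating 0 2 (Suc (Suc j))) =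
      2 # (0 # alternating 2 0 j @ [2,1,0]) @ [2]"
    using flip_append_no_merge[of "1 # 2 # alternating 0 2 (Suc j)" "[0,2]" "2 * j + 4"]
    by (simp add: alternating_Suc_snoc[of 0 2 "Suc j"])
  ultimately have
    "flips_within (Suc (Suc (2 * j + 2))) ([1,2] @ alternating 0 2 (Suc (Suc j))) [0,1,2]"
    using flips_within_flip by simp
  then show ?thesis
    by (simp add: eval_nat_numeral)
qed

lemma two_letter_distinct_adj_eq_alternating:
  assumes "x \<noteq> y" and "distinct_adj w" "set w \<subseteq> {x, y}" "last w = y"
  shows "\<exists>k. w = alternating x y k \<or> w = y # alternating x y k"
  using assms(2-)
proof (induction w)
  case (Cons a w)
  show ?case
  proof (cases "w = []")
    case True
    then show ?thesis
      using Cons.prems(3) by (metis alternating_0 last_ConsL)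
  next
    case False
    then have "a \<noteq> hd w" "a \<in> {x, y}"
      using Cons.prems(1,2) by (auto simp: distinct_adj_Cons)
    moreover obtain k where "w = alternating x y k \<or> w = y # alternating x y k"
      using Cons False by (auto simp: distinct_adj_Cons)
    ultimately consider "w = alternating x y k" "a = y" | "w = y # alternating x y k" "a = x"
      using False assms(1) by (cases k) auto
    then show ?thesis
      by cases (auto intro: exI[of _ "Suc k"])
  qed
qed (metis alternating_0)

lemma unique_first_symbol_flips_within:
  assumes "distinct_adj (a # r)" "set (a # r) = {0,1,2}" "last r = 2"
    and "a \<notin> set r" "4 \<le> length r"
  shows "flips_within (length r - 1) (a # r) [0,1,2]"
proof -
  have r_distinct: "distinct_adj r"
    using assms(1) by (rule distinct_adj_ConsD)
  have "r \<noteq> []"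
    using assms(5) by auto
  then have "a \<noteq> 2"
    using assms(3,4) last_in_set by metis
  moreover have "a \<in> {0,1,2}"
    using assms(2) by (metis list.set_intros(1))
  moreover have "set r = {0,1,2} - {a}"
    using assms(2,4) by (metis Diff_insert_absorb list.set(2))
  ultimately consider "a = 0" "set r \<subseteq> {1,2}" | "a = 1" "set r \<subseteq> {0,2}"
    by fastforce
  then show ?thesis
  proof cases
    case 1
    then obtain k where r: "r = alternating 1 2 k \<or> r = 2 # alternating 1 2 k"
      using two_letter_distinct_adj_eq_alternating[of 1 2 r] r_distinct assms(3) by auto
    with assms(5) have "2 \<le> k"
      by auto
    then obtain j where "k = Suc (Suc j)"
      using add_2_eq_Suc le_Suc_ex by metis
    then show ?thesis
      using r 1 flips_within_0_alternating_12[of j] flips_within_02_alternating_12[of j]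
      by (auto simp: eval_nat_numeral)
  next
    case 2
    then obtain k where r: "r = alternating 0 2 k \<or> r = 2 # alternating 0 2 k"
      using two_letter_distinct_adj_eq_alternating[of 0 2 r] r_distinct assms(3) by auto
    with assms(5) have "2 \<le> k"
      by auto
    then obtain j where "k = Suc (Suc j)"
      using add_2_eq_Suc le_Suc_ex by metis
    then show ?thesis
      using r 2 flips_within_1_alternating_02[of "Suc j"] flips_within_12_alternating_02[of j]
      by (auto simp: eval_nat_numeral)
  qed
qed

fun flips_search :: "nat \<Rightarrow> nat list \<Rightarrow> nat list \<Rightarrow> bool" where
  "flips_search 0 s t \<longleftrightarrow> s = t"
| "flips_search (Suc m) s t \<longleftrightarrow>
    s = t \<or> (\<exists>i \<in> set [1..<Suc (length s)]. flips_search m (flip i s) t)"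

lemma short_ternary_strings_search:
  "\<forall>n \<in> {3,4,5}. \<forall>s \<in> set (List.n_lists n [0,1,2]).
     distinct_adj s \<and> last s = 2 \<and> 0 \<in> set s \<and> 1 \<in> set s \<and> s \<noteq> [0,2,1,2] \<longrightarrow>
     flips_search (n - 2) s [0,1,2]"
  by code_simp

lemma flips_search_sound: "flips_search m s t \<Longrightarrow> flips_within m s t"
proof (induction m arbitrary: s)
  case (Suc m)
  then show ?case
    by (auto intro: flips_within_flip)
qed simp

lemma short_ternary_flips_within:
  assumes "distinct_adj s" "set s = {0,1,2}" "last s = 2" "s \<noteq> [0,2,1,2]" "length s \<le> 5"
  shows "flips_within (length s - 2) s [0,1,2]"
proof -
  have "3 \<le> length s"
    using card_length[of s] assms(2) by simp
  then have "length s \<in> {3,4,5}"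
    using assms(5) by auto
  moreover have "s \<in> set (List.n_lists (length s) [0,1,2])"
    using assms(2) by (simp add: set_n_lists)
  ultimately have "flips_search (length s - 2) s [0,1,2]"
    using short_ternary_strings_search assms by blast
  then show ?thesis
    by (rule flips_search_sound)
qed

lemma flip_merges_repeated_first_symbol:
  assumes "distinct_adj (a # r)" and "a \<in> set r"
  obtains i t where "1 \<le> i" "i \<le> length r" "flip i (a # r) = t" "distinct_adj t"
    "length t = length r" "set t = set (a # r)" "last t = last (a # r)"
proof -
  obtain xs ys where r: "r = xs @ a # ys"
    using assms(2) by (meson split_list)
  have flip: "flip (Suc (length xs)) (a # r) = rev xs @ a # ys"
    using flip_append_merge assms(1) by (simp add: r)
  show ?thesis
  proof (rule that[OF _ _ flip])
    show "distinct_adj (rev xs @ a # ys)"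
      using distinct_adj_flip flip by metis
  qed (auto simp: r)
qed

lemma normalized_ternary_flips_within:
  assumes "distinct_adj s" "set s = {0,1,2}" "last s = 2" "s \<noteq> [0,2,1,2]"
  shows "flips_within (length s - 2) s [0,1,2]"
  using assms
proof (induction "length s" arbitrary: s rule: less_induct)
  case less
  show ?case
  proof (cases "length s \<le> 5")
    case True
    then show ?thesis
      using less.prems by (rule short_ternary_flips_within[rotated 4])
  next
    case False
    then obtain a r where s: "s = a # r"
      by (cases s) auto
    show ?thesis
    proof (cases "a \<in> set r")
      case True
      with less.prems(1) obtain i t where flip: "1 \<le> i" "i \<le> length r" "flip i s = t"
        and t: "distinct_adj t" "length t = length r" "set t = set s" "last t = last s"
        unfolding s by (rule flip_merges_repeated_first_symbol)
      have "flips_within (length t - 2) t [0,1,2]"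
      proof (rule less.hyps)
        show "length t < length s" "t \<noteq> [0,2,1,2]"
          using t(2) False by (auto simp: s)
      qed (use t less.prems in simp_all)
      then have "flips_within (Suc (length t - 2)) s [0,1,2]"
        using flips_within_flip[OF flip(3)] flip(1,2) by (simp add: s)
      moreover have "Suc (length t - 2) = length s - 2"
        using t(2) False by (simp add: s)
      ultimately show ?thesis
        by simp
    next
      case False
      have "r \<noteq> []" "4 \<le> length r"
        using \<open>\<not> length s \<le> 5\<close> by (auto simp: s)
      then have "flips_within (length r - 1) (a # r) [0,1,2]"
        using unique_first_symbol_flips_within[of a r] less.prems(1-3) False by (simp add: s)
      then show ?thesis
        by (simp add: s)
    qed
  qed
qed

theorem lemma4p2:
  fixes s :: "nat list"
  assumes "normalized s"
    and "fully_kary 3 s"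
    and "s \<noteq> []" and "last s = 2"
    and "s \<noteq> [0, 2, 1, 2]"
  shows "sortable 3 s \<and> sorting_distance 3 s \<le> length s - 2"
proof -
  have "[0..<3] = [0, 1, 2::nat]" "{0..<3} = {0, 1, 2::nat}"
    by (auto simp: upt_rec)
  then have "flips_within (length s - 2) s [0..<3]"
    using normalized_ternary_flips_within[of s] assms
    by (simp add: normalized_iff_distinct_adj fully_kary_def)
  then show ?thesis
    by (rule sortable_and_sorting_distance_le)
qed

end
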